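(* Let $n \geq 1$ and let $\Gamma$ be a group that is the directed union of a directed family $(\Gamma_i)_{i\in I}$ of subgroups which are pairwise isomorphic and $n$-boundedly acyclic. Then $\Gamma$ is $n$-boundedly acyclic.
   Context: A group $G$ is $n$-boundedly acyclic if $\operatorname{H}^i_b(G;\mathbb{R}) \cong 0$ for all $i \in \{1,\dots,n\}$, where $\operatorname{H}^*_b(\cdot;\mathbb{R})$ is bounded cohomology with trivial real coefficients. *)

theory Defs
  imports Complex_Main "HOL-Algebra.Group"
begin

text \<open>Bounded cohomology of a group G with trivial real coefficients, via the
standard inhomogeneous bounded cochain complex: a degree-k cochain is a
function on k-tuples of group elements (represented as lists of length k
with entries in the carrier), bounded on those tuples.\<close>

definition tuples :: "('a, 'b) monoid_scheme \<Rightarrow> nat \<Rightarrow> 'a list set" where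
  "tuples G k = {xs. length xs = k \<and> set xs \<subseteq> carrier G}"

definition bcochain :: "('a, 'b) monoid_scheme \<Rightarrow> nat \<Rightarrow> ('a list \<Rightarrow> real) \<Rightarrow> bool" where
  "bcochain G k f \<longleftrightarrow> (\<exists>C. \<forall>xs \<in> tuples G k. \<bar>f xs\<bar> \<le> C)"

text \<open>Inhomogeneous coboundary from degree k to degree k+1, evaluated at a
(k+1)-tuple xs = (g_1,...,g_{k+1}):
 f(g_2..g_{k+1}) + sum_{i=1}^k (-1)^i f(..,g_i g_{i+1},..) + (-1)^{k+1} f(g_1..g_k).\<close>

definition coboundary :: "('a, 'b) monoid_scheme \<Rightarrow> nat \<Rightarrow> ('a list \<Rightarrow> real) \<Rightarrow> 'a list \<Rightarrow> real" where
  "coboundary G k f xs =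
     f (tl xs)
     + (\<Sum>i<k. (-1) ^ (i + 1) * f (take i xs @ [xs ! i \<otimes>\<^bsub>G\<^esub> xs ! (i + 1)] @ drop (i + 2) xs))
     + (-1) ^ (k + 1) * f (butlast xs)"

definition bounded_cohomology_vanishes :: "('a, 'b) monoid_scheme \<Rightarrow> nat \<Rightarrow> bool" where
  "bounded_cohomology_vanishes G k \<longleftrightarrow>
     (\<forall>f. bcochain G k f \<and> (\<forall>xs \<in> tuples G (k + 1). coboundary G k f xs = 0)
        \<longrightarrow> (\<exists>g. bcochain G (k - 1) g \<and> (\<forall>xs \<in> tuples G k. f xs = coboundary G (k - 1) g xs)))"

definition boundedly_acyclic :: "('a, 'b) monoid_scheme \<Rightarrow> nat \<Rightarrow> bool" where
  "boundedly_acyclic G n \<longleftrightarrow> (\<forall>i \<in> {1..n}. bounded_cohomology_vanishes G i)"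

end

(* Vanishing of bounded cohomology in degree k says that the coboundary maps the bounded
   (k-1)-cochains onto the bounded k-cocycles.  By the open mapping theorem, proved here by a
   Baire-type argument directly in the sup norm, every bounded cocycle f then has a primitive of
   norm at most C * |f| (the uniform boundary condition).  This constant is an isomorphism
   invariant, so one C serves all the subgroups H i.  Given a bounded cocycle f on the union,
   pick such primitives on every H i; they lie in a product of compact intervals, so by
   Tychonoff they cluster along the directed family.  Every tuple lies in some H i and the
   coboundary at a fixed tuple is continuous in the cochain, so the cluster point is a bounded
   primitive of f. *)

theory Submission
  imports Defs "HOL-Analysis.Analysis"
begin

section \<open>Face maps and the coboundary\<close>

definition face :: "('a, 'b) monoid_scheme \<Rightarrow> nat \<Rightarrow> 'a list \<Rightarrow> 'a list" where
  "face G i xs = (if i = 0 then tl xs else if i = length xs then butlast xs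
     else take (i - 1) xs @ [xs ! (i - 1) \<otimes>\<^bsub>G\<^esub> xs ! i] @ drop (i + 1) xs)"

lemma length_face: "i \<le> length xs \<Longrightarrow> 1 \<le> length xs \<Longrightarrow> length (face G i xs) = length xs - 1"
  unfolding face_def by auto

lemma nth_face:
  assumes "i \<le> length xs" "p + 1 < length xs"
  shows "face G i xs ! p = (if i = 0 then xs ! (p + 1) else if p + 1 < i then xs ! p
     else if p + 1 = i then xs ! p \<otimes>\<^bsub>G\<^esub> xs ! (p + 1) else xs ! (p + 1))"
  using assms unfolding face_def by (auto simp: nth_tl nth_butlast nth_append min_def nth_Cons')

lemma face_in_tuples:
  assumes G: "monoid G" and xs: "xs \<in> tuples G (k + 1)" and i: "i \<le> k + 1"
  shows "face G i xs \<in> tuples G k"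
proof -
  have l: "length xs = k + 1" and carr: "\<And>q. q < k + 1 \<Longrightarrow> xs ! q \<in> carrier G"
    using xs nth_mem by (auto simp: tuples_def)
  have "face G i xs ! p \<in> carrier G" if "p < k" for p
    using that l i carr monoid.m_closed[OF G] by (simp add: nth_face)
  then show ?thesis
    using i l length_face[of i xs G] by (auto simp: tuples_def in_set_conv_nth)
qed

lemma face_face:
  assumes G: "monoid G" and xs: "set xs \<subseteq> carrier G" and l: "2 \<le> length xs"
    and ij: "i < j" "j \<le> length xs"
  shows "face G i (face G j xs) = face G (j - 1) (face G i xs)"
proof (rule nth_equalityI)
  have lj: "length (face G j xs) = length xs - 1" and li: "length (face G i xs) = length xs - 1"
    using ij l by (simp_all add: length_face)
  then show "length (face G i (face G j xs)) = length (face G (j - 1) (face G i xs))"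
    using ij l by (simp add: length_face)
  fix p assume "p < length (face G i (face G j xs))"
  then have p: "p + 2 < length xs" using lj ij l by (simp add: length_face)
  have carr: "\<And>q. q < length xs \<Longrightarrow> xs ! q \<in> carrier G" using xs nth_mem by blast
  have outer: "face G i (face G j xs) ! p = (if i = 0 then face G j xs ! (p + 1) else if p + 1 < i
      then face G j xs ! p else if p + 1 = i then face G j xs ! p \<otimes>\<^bsub>G\<^esub> face G j xs ! (p + 1)
      else face G j xs ! (p + 1))"
    "face G (j - 1) (face G i xs) ! p = (if j - 1 = 0 then face G i xs ! (p + 1) else if p + 1 < j - 1
      then face G i xs ! p else if p + 1 = j - 1 then face G i xs ! p \<otimes>\<^bsub>G\<^esub> face G i xs ! (p + 1)
      else face G i xs ! (p + 1))"
    using p ij lj li by (simp_all add: nth_face)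
  have inner: "face G j xs ! q = (if q + 1 < j then xs ! q
      else if q + 1 = j then xs ! q \<otimes>\<^bsub>G\<^esub> xs ! (q + 1) else xs ! (q + 1))"
    "face G i xs ! q = (if i = 0 then xs ! (q + 1) else if q + 1 < i then xs ! q
      else if q + 1 = i then xs ! q \<otimes>\<^bsub>G\<^esub> xs ! (q + 1) else xs ! (q + 1))"
    if "q + 1 < length xs" for q
    using that ij by (simp_all add: nth_face)
  show "face G i (face G j xs) ! p = face G (j - 1) (face G i xs) ! p"
    unfolding outer using p ij carr by (auto simp: inner monoid.m_assoc[OF G])
qed

lemma coboundary_eq_sum_faces:
  assumes "length xs = k + 1"
  shows "coboundary G k f xs = (\<Sum>i\<le>k + 1. (-1) ^ i * f (face G i xs))"
proof -
  have inner: "(\<Sum>i<k. (-1) ^ (i + 1) * f (take i xs @ [xs ! i \<otimes>\<^bsub>G\<^esub> xs ! (i + 1)] @ drop (i + 2) xs))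
      = (\<Sum>i<k. (-1) ^ Suc i * f (face G (Suc i) xs))"
    using assms by (intro sum.cong) (auto simp: face_def)
  have "(\<Sum>i\<le>k + 1. (-1) ^ i * f (face G i xs))
      = f (face G 0 xs) + (\<Sum>i\<le>k. (-1) ^ Suc i * f (face G (Suc i) xs))"
    by (simp only: Suc_eq_plus1[symmetric] sum.atMost_Suc_shift) simp
  also have "\<dots> = f (face G 0 xs) + (\<Sum>i<k. (-1) ^ Suc i * f (face G (Suc i) xs))
        + (-1) ^ (k + 1) * f (face G (k + 1) xs)"
    by (simp add: lessThan_Suc_atMost[symmetric])
  also have "\<dots> = coboundary G k f xs"
    unfolding coboundary_def inner using assms by (simp add: face_def)
  finally show ?thesis by simp
qed

lemma coboundary_coboundary:
  assumes G: "monoid G" and xs: "xs \<in> tuples G (k + 2)"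
  shows "coboundary G (k + 1) (coboundary G k g) xs = 0"
proof -
  have l: "length xs = k + 2" and carr: "set xs \<subseteq> carrier G" using xs by (auto simp: tuples_def)
  define a where "a = (\<lambda>(i, j). (-1) ^ (i + j) * g (face G i (face G j xs)) :: real)"
  define P where "P = {..k + 1} \<times> {..k + 2}"
  define below where "below = {p \<in> P. fst p < snd p}"
  define above where "above = {p \<in> P. snd p \<le> fst p}"
  have "coboundary G (k + 1) (coboundary G k g) xs
      = (\<Sum>j\<le>k + 2. (-1) ^ j * coboundary G k g (face G j xs))"
    using coboundary_eq_sum_faces[of xs "k + 1"] l by simp
  also have "\<dots> = (\<Sum>j\<le>k + 2. \<Sum>i\<le>k + 1. a (i, j))"
  proof (rule sum.cong)
    fix j assume "j \<in> {..k + 2}"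
    then have "length (face G j xs) = k + 1" using l by (simp add: length_face)
    then show "(-1) ^ j * coboundary G k g (face G j xs) = (\<Sum>i\<le>k + 1. a (i, j))"
      by (simp add: coboundary_eq_sum_faces a_def sum_distrib_left power_add mult_ac
          right_diff_distrib)
  qed simp
  also have "\<dots> = (\<Sum>i\<le>k + 1. \<Sum>j\<le>k + 2. a (i, j))" by (rule sum.swap)
  also have "\<dots> = sum a P"
    unfolding P_def sum.cartesian_product by (simp add: case_prod_eta)
  also have "P = below \<union> above" unfolding below_def above_def by auto
  also have "sum a (below \<union> above) = sum a below + sum a above"
    by (rule sum.union_disjoint) (auto simp: below_def above_def P_def)
  also have "sum a below = sum (\<lambda>(i, j). a (j, i + 1)) above"
    by (rule sum.reindex_bij_witness[where j = "\<lambda>(i, j). (j - 1, i)" and i = "\<lambda>(i, j). (j, i + 1)"])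
       (auto simp: below_def above_def P_def)
  also have "\<dots> = sum (\<lambda>p. - a p) above"
  proof (rule sum.cong)
    fix p assume "p \<in> above"
    then obtain i j where p: "p = (i, j)" "j \<le> i" "i \<le> k + 1" by (auto simp: above_def P_def)
    then have "face G j (face G (i + 1) xs) = face G i (face G j xs)"
      using face_face[OF G carr, of j "i + 1"] l by simp
    then show "(\<lambda>(i, j). a (j, i + 1)) p = - a p"
      unfolding p a_def by (simp add: add_ac)
  qed simp
  finally show ?thesis by (simp add: sum_negf)
qed

lemma coboundary_linear:
  "coboundary G k (\<lambda>t. a * g t + b * h t) xs = a * coboundary G k g xs + b * coboundary G k h xs"
proof -
  have sum_linear: "(\<Sum>i<k. c i * (a * p i + b * q i))
      = a * (\<Sum>i<k. c i * p i) + b * (\<Sum>i<k. c i * q i)" for c p q :: "nat \<Rightarrow> real"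
    by (simp add: sum_distrib_left sum.distrib algebra_simps)
  show ?thesis unfolding coboundary_def sum_linear by (simp add: algebra_simps)
qed

lemma coboundary_carrier_update [simp]: "coboundary (G\<lparr>carrier := X\<rparr>) = coboundary G"
  by (simp add: coboundary_def[abs_def])

lemma continuous_on_coboundary: "continuous_on UNIV (\<lambda>f. coboundary G k f xs)"
  unfolding coboundary_def by (intro continuous_intros continuous_on_product_coordinates)

lemma coboundary_cong:
  assumes "monoid G" "\<And>t. t \<in> tuples G k \<Longrightarrow> g t = g' t" "xs \<in> tuples G (k + 1)"
  shows "coboundary G k g xs = coboundary G k g' xs"
  using assms face_in_tuples[OF assms(1,3)]
  by (simp add: coboundary_eq_sum_faces tuples_def)

lemma tendsto_coboundary:
  assumes "monoid G" "\<And>t. t \<in> tuples G k \<Longrightarrow> ((\<lambda>n. fs n t) \<longlongrightarrow> f t) F" "xs \<in> tuples G (k + 1)"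
  shows "((\<lambda>n. coboundary G k (fs n) xs) \<longlongrightarrow> coboundary G k f xs) F"
proof -
  have l: "length xs = k + 1" using assms(3) by (simp add: tuples_def)
  show ?thesis unfolding coboundary_eq_sum_faces[OF l]
    by (intro tendsto_intros) (use assms face_in_tuples[OF assms(1,3)] in auto)
qed

lemma map_face:
  assumes "\<phi> \<in> hom G H" "set xs \<subseteq> carrier G" "i \<le> length xs"
  shows "map \<phi> (face G i xs) = face H i (map \<phi> xs)"
proof (cases "i = 0 \<or> i = length xs")
  case False
  then have "i < length xs" "xs ! (i - 1) \<in> carrier G" "xs ! i \<in> carrier G"
    using assms(2,3) nth_mem[of _ xs] by auto
  then show ?thesis using False hom_mult[OF assms(1)] by (simp add: face_def take_map drop_map)
qed (auto simp: face_def map_tl map_butlast)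

lemma map_in_tuples: "\<phi> \<in> hom G H \<Longrightarrow> xs \<in> tuples G k \<Longrightarrow> map \<phi> xs \<in> tuples H k"
  by (auto simp: tuples_def hom_in_carrier)

lemma coboundary_comp_hom:
  assumes "\<phi> \<in> hom G H" "xs \<in> tuples G (k + 1)"
  shows "coboundary G k (\<lambda>ys. f (map \<phi> ys)) xs = coboundary H k f (map \<phi> xs)"
  using assms map_face[OF assms(1)] by (simp add: coboundary_eq_sum_faces tuples_def)

lemma coboundary_eq_0_if_tendsto:
  assumes "monoid G" and cocycles: "\<And>j xs. xs \<in> tuples G (k + 1) \<Longrightarrow> coboundary G k (fs j) xs = 0"
    and "\<And>t. t \<in> tuples G k \<Longrightarrow> (\<lambda>j. fs j t) \<longlonglongrightarrow> f t" and xs: "xs \<in> tuples G (k + 1)"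
  shows "coboundary G k f xs = 0"
proof -
  have "(\<lambda>j. coboundary G k (fs j) xs) \<longlonglongrightarrow> coboundary G k f xs"
    by (rule tendsto_coboundary[OF assms(1,3) xs])
  then show ?thesis using cocycles[OF xs] by (simp add: LIMSEQ_const_iff)
qed

definition bounded_by :: "'x set \<Rightarrow> ('x \<Rightarrow> real) \<Rightarrow> real \<Rightarrow> bool" where
  "bounded_by S f c \<longleftrightarrow> (\<forall>s\<in>S. \<bar>f s\<bar> \<le> c)"

lemma bounded_by_mono: "bounded_by S f c \<Longrightarrow> c \<le> c' \<Longrightarrow> bounded_by S f c'"
  unfolding bounded_by_def by force

lemma bounded_by_cong: "(\<And>x. x \<in> S \<Longrightarrow> f x = g x) \<Longrightarrow> bounded_by S f c \<longleftrightarrow> bounded_by S g c"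
  unfolding bounded_by_def by simp

lemma bounded_by_scale: "bounded_by S f c \<Longrightarrow> bounded_by S (\<lambda>x. a * f x) (\<bar>a\<bar> * c)"
  unfolding bounded_by_def by (simp add: abs_mult mult_left_mono)

lemma bounded_by_add:
  "bounded_by S f c \<Longrightarrow> bounded_by S g d \<Longrightarrow> bounded_by S (\<lambda>x. f x + g x) (c + d)"
  unfolding bounded_by_def by (meson abs_triangle_ineq add_mono order_trans)

lemma bounded_by_diff:
  "bounded_by S f c \<Longrightarrow> bounded_by S g d \<Longrightarrow> bounded_by S (\<lambda>x. f x - g x) (c + d)"
  unfolding bounded_by_def by (meson abs_triangle_ineq4 add_mono order_trans)

lemma bcochain_iff_bounded_by: "bcochain G k f \<longleftrightarrow> (\<exists>c. bounded_by (tuples G k) f c)"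
  by (simp add: bcochain_def bounded_by_def)

lemma abs_coboundary_le:
  assumes G: "monoid G" and g: "bounded_by (tuples G k) g c" and xs: "xs \<in> tuples G (k + 1)"
  shows "\<bar>coboundary G k g xs\<bar> \<le> (real k + 2) * c"
proof -
  have l: "length xs = k + 1" using xs by (simp add: tuples_def)
  have "\<bar>coboundary G k g xs\<bar> \<le> (\<Sum>i\<le>k + 1. \<bar>(-1) ^ i * g (face G i xs)\<bar>)"
    unfolding coboundary_eq_sum_faces[OF l] by (rule sum_abs)
  also have "\<dots> \<le> (\<Sum>i\<le>k + 1. c)"
    using g face_in_tuples[OF G xs] by (intro sum_mono) (simp add: bounded_by_def abs_mult)
  finally show ?thesis by (simp add: add.commute)
qed

lemma convergent_if_steps_le_decrements:
  fixes S \<rho> :: "nat \<Rightarrow> real"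
  assumes steps: "\<And>j. \<bar>S (Suc j) - S j\<bar> \<le> \<rho> j - \<rho> (Suc j)" and nonneg: "\<And>j. 0 \<le> \<rho> j"
  shows "convergent S" and "\<bar>lim S - S j\<bar> \<le> \<rho> j"
proof -
  have telescope: "\<bar>S l - S j\<bar> \<le> \<rho> j - \<rho> l" if "j \<le> l" for j l
    using that
  proof (induction l rule: dec_induct)
    case (step l)
    then show ?case using steps[of l] by linarith
  qed simp
  have "decseq \<rho>" using steps by (intro decseq_SucI) (smt (verit))
  then obtain L where "\<rho> \<longlonglongrightarrow> L" using nonneg decseq_convergent by blast
  then have "Cauchy \<rho>" by (rule LIMSEQ_imp_Cauchy)
  have "Cauchy S"
  proof (rule CauchyI)
    fix e :: real assume "0 < e"
    then obtain M where M: "\<And>n. M \<le> n \<Longrightarrow> \<bar>\<rho> M - \<rho> n\<bar> < e / 2"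
      using CauchyD[OF \<open>Cauchy \<rho>\<close>, of "e / 2"] by fastforce
    have "\<bar>S m - S n\<bar> < e" if "M \<le> m" "M \<le> n" for m n
      using telescope[OF that(1)] telescope[OF that(2)] M[OF that(1)] M[OF that(2)] by linarith
    then show "\<exists>M. \<forall>m\<ge>M. \<forall>n\<ge>M. norm (S m - S n) < e" by auto
  qed
  then show "convergent S" by (simp add: Cauchy_convergent_iff)
  then have "(\<lambda>l. \<bar>S l - S j\<bar>) \<longlonglongrightarrow> \<bar>lim S - S j\<bar>"
    by (intro tendsto_intros) (simp add: convergent_LIMSEQ_iff)
  moreover have "\<forall>l\<ge>j. \<bar>S l - S j\<bar> \<le> \<rho> j" using telescope nonneg by (smt (verit))
  ultimately show "\<bar>lim S - S j\<bar> \<le> \<rho> j" by (intro LIMSEQ_le_const2) auto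
qed

lemma zero_if_abs_le_geometric:
  fixes x a :: real
  assumes "\<And>N. \<bar>x\<bar> \<le> a * (1 / 2) ^ N"
  shows "x = 0"
proof -
  have "(\<lambda>N. a * (1 / 2 :: real) ^ N) \<longlonglongrightarrow> a * 0"
    by (intro tendsto_intros) simp
  then have "\<bar>x\<bar> \<le> 0" using assms by (intro LIMSEQ_le_const) auto
  then show ?thesis by simp
qed

section \<open>An open mapping theorem for the sup norm\<close>

locale sup_norm_open_mapping =
  fixes D :: "('x \<Rightarrow> real) \<Rightarrow> 'y \<Rightarrow> real" and T :: "'x set" and U :: "'y set"
    and Z :: "('y \<Rightarrow> real) set" and K :: real
  assumes linear: "\<And>g h a b u. u \<in> U \<Longrightarrow> D (\<lambda>t. a * g t + b * h t) u = a * D g u + b * D h u"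
    and bounded: "\<And>g c u. bounded_by T g c \<Longrightarrow> u \<in> U \<Longrightarrow> \<bar>D g u\<bar> \<le> K * c"
    and subspace: "\<And>f h a b. f \<in> Z \<Longrightarrow> h \<in> Z \<Longrightarrow> (\<lambda>u. a * f u + b * h u) \<in> Z"
    and range_subset: "\<And>g c. bounded_by T g c \<Longrightarrow> D g \<in> Z"
    and closed: "\<And>fs f c. (\<And>j. fs j \<in> Z) \<Longrightarrow> (\<And>u. u \<in> U \<Longrightarrow> (\<lambda>j. fs j u) \<longlonglongrightarrow> f u)
      \<Longrightarrow> bounded_by U f c \<Longrightarrow> f \<in> Z"
    and onto: "\<And>f c. f \<in> Z \<Longrightarrow> bounded_by U f c \<Longrightarrow> \<exists>g c'. bounded_by T g c' \<and> (\<forall>u\<in>U. D g u = f u)"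
begin

lemma D_zero: "u \<in> U \<Longrightarrow> D (\<lambda>t. 0) u = 0"
  using bounded[of "\<lambda>t. 0" 0 u] by (simp add: bounded_by_def)

lemma D_add: "u \<in> U \<Longrightarrow> D (\<lambda>t. g t + h t) u = D g u + D h u"
  using linear[of u 1 g 1 h] by simp

lemma D_diff: "u \<in> U \<Longrightarrow> D (\<lambda>t. g t - h t) u = D g u - D h u"
  using linear[of u 1 g "-1" h] by simp

lemma D_scale: "u \<in> U \<Longrightarrow> D (\<lambda>t. a * g t) u = a * D g u"
  using linear[of u a g 0 g] by simp

lemma Z_add: "f \<in> Z \<Longrightarrow> h \<in> Z \<Longrightarrow> (\<lambda>u. f u + h u) \<in> Z"
  using subspace[of f h 1 1] by simp

lemma Z_diff: "f \<in> Z \<Longrightarrow> h \<in> Z \<Longrightarrow> (\<lambda>u. f u - h u) \<in> Z"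
  using subspace[of f h 1 "-1"] by simp

lemma Z_scale: "f \<in> Z \<Longrightarrow> (\<lambda>u. a * f u) \<in> Z"
  using subspace[of f f a 0] by simp

definition approximable :: "real \<Rightarrow> ('y \<Rightarrow> real) \<Rightarrow> bool" where
  "approximable m f \<longleftrightarrow> (\<forall>e>0. \<exists>g. bounded_by T g m \<and> bounded_by U (\<lambda>u. f u - D g u) e)"

lemma approximable_half_diff:
  assumes plus: "approximable m (\<lambda>u. S u + f u)" and minus: "approximable m (\<lambda>u. S u - f u)"
  shows "approximable m f"
  unfolding approximable_def
proof (intro allI impI)
  fix e :: real assume "0 < e"
  then obtain g1 g2 where g1: "bounded_by T g1 m" "bounded_by U (\<lambda>u. S u + f u - D g1 u) e"
    and g2: "bounded_by T g2 m" "bounded_by U (\<lambda>u. S u - f u - D g2 u) e"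
    using plus minus unfolding approximable_def by blast
  define g where "g t = (1 / 2) * g1 t + (- 1 / 2) * g2 t" for t
  have "bounded_by T g (\<bar>1 / 2\<bar> * m + \<bar>- 1 / 2\<bar> * m)"
    unfolding g_def by (intro bounded_by_add bounded_by_scale g1(1) g2(1))
  then have "bounded_by T g m" by simp
  have eq: "f u - D g u = (1 / 2) * ((S u + f u - D g1 u) - (S u - f u - D g2 u))" if "u \<in> U" for u
    using linear[OF that, of "1 / 2" g1 "- 1 / 2" g2] unfolding g_def by (simp add: algebra_simps)
  have "bounded_by U (\<lambda>u. (1 / 2) * ((S u + f u - D g1 u) - (S u - f u - D g2 u)))
      (\<bar>1 / 2\<bar> * (e + e))"
    by (intro bounded_by_scale bounded_by_diff g1(2) g2(2))
  then have "bounded_by U (\<lambda>u. f u - D g u) (\<bar>1 / 2\<bar> * (e + e))"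
    using bounded_by_cong[of U "\<lambda>u. f u - D g u", OF eq] by blast
  then have "bounded_by U (\<lambda>u. f u - D g u) e" by simp
  with \<open>bounded_by T g m\<close> show "\<exists>g. bounded_by T g m \<and> bounded_by U (\<lambda>u. f u - D g u) e"
    by blast
qed

lemma exists_far_point_near:
  assumes f0: "f0 \<in> Z" "bounded_by U f0 (\<rho> / 2)" "\<not> approximable m f0"
    and S: "S \<in> Z" "bounded_by U S c" and \<rho>: "0 < \<rho>"
  shows "\<exists>f\<in>Z. \<exists>\<rho>'>0. \<rho>' \<le> \<rho> / 2 \<and> bounded_by U (\<lambda>u. f u - S u) (\<rho> / 2) \<and> bounded_by U f (c + \<rho> / 2)
    \<and> (\<forall>g. bounded_by T g m \<longrightarrow> \<not> bounded_by U (\<lambda>u. f u - D g u) (2 * \<rho>'))"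
proof -
  have "\<not> approximable m (\<lambda>u. S u + f0 u) \<or> \<not> approximable m (\<lambda>u. S u - f0 u)"
    using approximable_half_diff f0(3) by blast
  moreover have "(\<lambda>u. S u + f0 u) \<in> Z" "(\<lambda>u. S u - f0 u) \<in> Z"
    using S f0 by (simp_all add: Z_add Z_diff)
  moreover have "bounded_by U (\<lambda>u. S u + f0 u) (c + \<rho> / 2)"
    "bounded_by U (\<lambda>u. S u - f0 u) (c + \<rho> / 2)"
    using S(2) f0(2) by (simp_all add: bounded_by_add bounded_by_diff)
  ultimately obtain f where f: "f \<in> Z" "bounded_by U (\<lambda>u. f u - S u) (\<rho> / 2)"
      "bounded_by U f (c + \<rho> / 2)" "\<not> approximable m f"
    using f0(2) unfolding bounded_by_def by force
  then obtain e where e: "0 < e" "\<And>g. bounded_by T g m \<Longrightarrow> \<not> bounded_by U (\<lambda>u. f u - D g u) e"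
    unfolding approximable_def by blast
  define \<rho>' where "\<rho>' = min (\<rho> / 2) (e / 2)"
  have "\<not> bounded_by U (\<lambda>u. f u - D g u) (2 * \<rho>')" if "bounded_by T g m" for g
    using e(2)[OF that] bounded_by_mono[of U _ "2 * \<rho>'" e] by (auto simp: \<rho>'_def)
  moreover have "0 < \<rho>'" "\<rho>' \<le> \<rho> / 2" using \<rho> e(1) by (auto simp: \<rho>'_def)
  ultimately show ?thesis using f(1-3) by blast
qed

lemma nested_limit:
  assumes S: "\<And>n. S n \<in> Z" "bounded_by U (S 0) c" and \<rho>: "\<And>n. 0 \<le> \<rho> n"
    and steps: "\<And>n. bounded_by U (\<lambda>u. S (Suc n) u - S n u) (\<rho> n - \<rho> (Suc n))"
  shows "\<exists>F\<in>Z. bounded_by U F (\<rho> 0 + c) \<and> (\<forall>n. bounded_by U (\<lambda>u. F u - S n u) (\<rho> n))"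
proof -
  define F where "F u = lim (\<lambda>n. S n u)" for u
  have conv: "convergent (\<lambda>n. S n u)" and near: "\<bar>F u - S n u\<bar> \<le> \<rho> n" if "u \<in> U" for u n
    using convergent_if_steps_le_decrements[of "\<lambda>n. S n u" \<rho>] steps that \<rho>
    by (simp_all add: F_def bounded_by_def)
  have "bounded_by U (\<lambda>u. (F u - S 0 u) + S 0 u) (\<rho> 0 + c)"
    using near S(2) by (intro bounded_by_add) (auto simp: bounded_by_def)
  then have F_bounded: "bounded_by U F (\<rho> 0 + c)" by simp
  have "F \<in> Z"
  proof (rule closed[OF S(1) _ F_bounded])
    show "(\<lambda>n. S n u) \<longlonglongrightarrow> F u" if "u \<in> U" for u
      using conv[OF that] by (simp add: F_def convergent_LIMSEQ_iff)
  qed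
  with near F_bounded show ?thesis by (auto simp: bounded_by_def)
qed

lemma approximable_near_zero: "\<exists>m\<ge>0. \<exists>r>0. \<forall>f\<in>Z. bounded_by U f r \<longrightarrow> approximable m f"
proof (rule ccontr)
  \<comment> \<open>Otherwise there are nested balls around S n of radius \<rho> n in Z that avoid the closure of
    the image of the n-ball; their common point is in the image of no ball, contradicting onto.\<close>
  assume "\<not> ?thesis"
  then have nowhere: "\<exists>f\<in>Z. bounded_by U f r \<and> \<not> approximable m f" if "0 \<le> m" "0 < r" for m r
    using that by blast
  define P where "P n x \<longleftrightarrow> fst x \<in> Z \<and> 0 < snd x \<and> (\<exists>c. bounded_by U (fst x) c)"
    for n :: nat and x :: "('y \<Rightarrow> real) \<times> real"
  define Q where "Q n x y \<longleftrightarrow> bounded_by U (\<lambda>u. fst y u - fst x u) (snd x / 2) \<and> snd y \<le> snd x / 2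
      \<and> (\<forall>g. bounded_by T g (real n) \<longrightarrow> \<not> bounded_by U (\<lambda>u. fst y u - D g u) (2 * snd y))"
    for n :: nat and x y :: "('y \<Rightarrow> real) \<times> real"
  have "bounded_by T (\<lambda>t. 0) 0" by (simp add: bounded_by_def)
  then have "D (\<lambda>t. 0) \<in> Z" by (rule range_subset)
  moreover have "bounded_by U (D (\<lambda>t. 0)) 0" by (simp add: bounded_by_def D_zero)
  ultimately have "P 0 (D (\<lambda>t. 0), 1)" unfolding P_def by auto
  moreover have "\<exists>y. P (Suc n) y \<and> Q n x y" if Pnx: "P n x" for n x
  proof -
    obtain S \<rho> c where x: "x = (S, \<rho>)" "S \<in> Z" "0 < \<rho>" "bounded_by U S c"
      using Pnx unfolding P_def by (metis prod.collapse)
    obtain f0 where "f0 \<in> Z" "bounded_by U f0 (\<rho> / 2)" "\<not> approximable (real n) f0"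
      using nowhere[of "real n" "\<rho> / 2"] x(3) by auto
    from exists_far_point_near[OF this x(2,4,3)] obtain f \<rho>' where "f \<in> Z" "0 < \<rho>'" "\<rho>' \<le> \<rho> / 2"
      "bounded_by U (\<lambda>u. f u - S u) (\<rho> / 2)" "bounded_by U f (c + \<rho> / 2)"
      "\<forall>g. bounded_by T g (real n) \<longrightarrow> \<not> bounded_by U (\<lambda>u. f u - D g u) (2 * \<rho>')"
      by blast
    then have "P (Suc n) (f, \<rho>') \<and> Q n x (f, \<rho>')" using x(1) by (auto simp: P_def Q_def)
    then show ?thesis by blast
  qed
  ultimately obtain x where x: "\<And>n. P n (x n)" "\<And>n. Q n (x n) (x (Suc n))"
    using dependent_nat_choice[of P Q] by blast
  define S where "S n = fst (x n)" for n
  define \<rho> where "\<rho> n = snd (x n)" for n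
  have \<rho>_pos: "0 < \<rho> n" for n using x(1) by (simp add: P_def \<rho>_def)
  have "bounded_by U (\<lambda>u. S (Suc n) u - S n u) (\<rho> n - \<rho> (Suc n))" for n
    using x(2)[of n] by (auto simp: Q_def S_def \<rho>_def elim: bounded_by_mono)
  moreover obtain c where "bounded_by U (S 0) c" using x(1)[of 0] by (auto simp: P_def S_def)
  ultimately obtain F where "F \<in> Z" "bounded_by U F (\<rho> 0 + c)"
    and near: "\<And>n. bounded_by U (\<lambda>u. F u - S n u) (\<rho> n)"
    using nested_limit[of S c \<rho>] x(1) \<rho>_pos by (auto simp: P_def S_def less_imp_le)
  then obtain g c' where g: "bounded_by T g c'" "\<And>u. u \<in> U \<Longrightarrow> D g u = F u"
    using onto by blast
  obtain n :: nat where "c' \<le> real n" using real_arch_simple by blast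
  then have far: "\<not> bounded_by U (\<lambda>u. S (Suc n) u - D g u) (2 * \<rho> (Suc n))"
    using x(2)[of n] bounded_by_mono[OF g(1)] by (auto simp: Q_def S_def \<rho>_def)
  have "bounded_by U (\<lambda>u. S (Suc n) u - D g u) (\<rho> (Suc n))"
    using near[of "Suc n"] by (simp add: bounded_by_def g(2) abs_minus_commute)
  then have "bounded_by U (\<lambda>u. S (Suc n) u - D g u) (2 * \<rho> (Suc n))"
    using \<rho>_pos[of "Suc n"] by (simp add: bounded_by_mono)
  with far show False by contradiction
qed

lemma approximable_scaled:
  assumes ball: "\<forall>f\<in>Z. bounded_by U f r \<longrightarrow> approximable m f"
    and h: "h \<in> Z" "bounded_by U h (r * s)" and s: "0 < s" and e: "0 < e"
  shows "\<exists>g. bounded_by T g (m * s) \<and> bounded_by U (\<lambda>u. h u - D g u) e"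
proof -
  define h' where "h' u = (1 / s) * h u" for u
  have "bounded_by U h' (\<bar>1 / s\<bar> * (r * s))" unfolding h'_def by (rule bounded_by_scale[OF h(2)])
  moreover have "h' \<in> Z" unfolding h'_def by (rule Z_scale[OF h(1)])
  ultimately have "approximable m h'" using ball s by simp
  moreover have "0 < e / s" using s e by simp
  ultimately obtain g where g: "bounded_by T g m" "bounded_by U (\<lambda>u. h' u - D g u) (e / s)"
    unfolding approximable_def by blast
  have "bounded_by T (\<lambda>t. s * g t) (\<bar>s\<bar> * m)" by (rule bounded_by_scale[OF g(1)])
  moreover have "bounded_by U (\<lambda>u. s * (h' u - D g u)) (\<bar>s\<bar> * (e / s))"
    by (rule bounded_by_scale[OF g(2)])
  moreover have "h u - D (\<lambda>t. s * g t) u = s * (h' u - D g u)" if "u \<in> U" for u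
    using s D_scale[OF that] by (simp add: h'_def algebra_simps)
  ultimately show ?thesis
    using s bounded_by_cong[of U "\<lambda>u. h u - D (\<lambda>t. s * g t) u"] by (auto simp: mult.commute)
qed

lemma approximating_sequence:
  assumes ball: "\<forall>f\<in>Z. bounded_by U f r \<longrightarrow> approximable m f" and r: "0 < r"
    and f: "f \<in> Z" "bounded_by U f r"
  shows "\<exists>Q. Q 0 = (\<lambda>t. 0) \<and> (\<forall>N. bounded_by T (\<lambda>t. Q (Suc N) t - Q N t) (m * (1 / 2) ^ N)
    \<and> bounded_by U (\<lambda>u. f u - D (Q N) u) (r * (1 / 2) ^ N))"
proof -
  have exists_step: "\<exists>g. bounded_by T g (m * (1 / 2) ^ N)
      \<and> bounded_by U (\<lambda>u. f u - D Q u - D g u) (r * (1 / 2) ^ Suc N)"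
    if "bounded_by T Q c" "bounded_by U (\<lambda>u. f u - D Q u) (r * (1 / 2) ^ N)" for N Q c
    using approximable_scaled[OF ball Z_diff[OF f(1) range_subset[OF that(1)]], of "(1 / 2) ^ N"
        "r * (1 / 2) ^ Suc N"] that(2) r by simp
  define step where "step N Q = (SOME g. bounded_by T g (m * (1 / 2) ^ N)
      \<and> bounded_by U (\<lambda>u. f u - D Q u - D g u) (r * (1 / 2) ^ Suc N))" for N Q
  have step: "bounded_by T (step N Q) (m * (1 / 2) ^ N)
      \<and> bounded_by U (\<lambda>u. f u - D Q u - D (step N Q) u) (r * (1 / 2) ^ Suc N)"
    if "bounded_by T Q c" "bounded_by U (\<lambda>u. f u - D Q u) (r * (1 / 2) ^ N)" for N Q c
    unfolding step_def by (rule someI_ex[OF exists_step[OF that]])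
  define Q where "Q = rec_nat (\<lambda>t. 0) (\<lambda>N Q t. Q t + step N Q t)"
  have Q_0: "Q 0 = (\<lambda>t. 0)" and Q_Suc: "Q (Suc N) = (\<lambda>t. Q N t + step N (Q N) t)" for N
    by (simp_all add: Q_def)
  have inv: "(\<exists>c. bounded_by T (Q N) c) \<and> bounded_by U (\<lambda>u. f u - D (Q N) u) (r * (1 / 2) ^ N)" for N
  proof (induction N)
    case 0
    then show ?case using f(2) by (auto simp: Q_0 D_zero bounded_by_def)
  next
    case (Suc N)
    then obtain c where c: "bounded_by T (Q N) c" by blast
    note step_N = step[OF c conjunct2[OF Suc]]
    have "bounded_by T (Q (Suc N)) (c + m * (1 / 2) ^ N)"
      unfolding Q_Suc by (rule bounded_by_add[OF c conjunct1[OF step_N]])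
    moreover have "bounded_by U (\<lambda>u. f u - D (Q (Suc N)) u) (r * (1 / 2) ^ Suc N)"
      using conjunct2[OF step_N] by (auto simp: Q_Suc D_add bounded_by_def diff_diff_eq)
    ultimately show ?case by blast
  qed
  have "bounded_by T (\<lambda>t. Q (Suc N) t - Q N t) (m * (1 / 2) ^ N)" for N
    using inv[of N] step[of "Q N" _ N] by (auto simp: Q_Suc)
  with Q_0 inv show ?thesis by blast
qed

lemma exact_preimage_near_zero:
  assumes ball: "\<forall>f\<in>Z. bounded_by U f r \<longrightarrow> approximable m f" and m: "0 \<le> m" and r: "0 < r"
    and f: "f \<in> Z" "bounded_by U f r"
  shows "\<exists>g. bounded_by T g (2 * m) \<and> (\<forall>u\<in>U. D g u = f u)"
proof -
  \<comment> \<open>The errors of the successive approximations Q N shrink geometrically, and so do the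
    corrections, which therefore sum to an exact preimage.\<close>
  obtain Q where Q_0: "Q 0 = (\<lambda>t. 0)"
    and steps: "\<And>N. bounded_by T (\<lambda>t. Q (Suc N) t - Q N t) (m * (1 / 2) ^ N)"
    and errors: "\<And>N. bounded_by U (\<lambda>u. f u - D (Q N) u) (r * (1 / 2) ^ N)"
    using approximating_sequence[OF ball r f] by blast
  define g where "g t = lim (\<lambda>N. Q N t)" for t
  have tail: "\<bar>g t - Q N t\<bar> \<le> 2 * m * (1 / 2) ^ N" if "t \<in> T" for t N
  proof -
    have "\<bar>Q (Suc N) t - Q N t\<bar> \<le> 2 * m * (1 / 2) ^ N - 2 * m * (1 / 2) ^ Suc N" for N
      using steps[of N] that by (simp add: bounded_by_def)
    then show ?thesis unfolding g_def using m
      by (intro convergent_if_steps_le_decrements(2)[of "\<lambda>N. Q N t" "\<lambda>N. 2 * m * (1 / 2) ^ N"]) auto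
  qed
  have "bounded_by T g (2 * m)" using tail[of _ 0] by (simp add: bounded_by_def Q_0)
  moreover have "D g u = f u" if u: "u \<in> U" for u
  proof -
    have "\<bar>D g u - f u\<bar> \<le> (K * (2 * m) + r) * (1 / 2) ^ N" for N
    proof -
      have "D g u - f u = D (\<lambda>t. g t - Q N t) u - (f u - D (Q N) u)" using D_diff[OF u] by simp
      moreover have "\<bar>D (\<lambda>t. g t - Q N t) u\<bar> \<le> K * (2 * m * (1 / 2) ^ N)"
        using tail by (intro bounded u) (simp add: bounded_by_def)
      moreover have "\<bar>f u - D (Q N) u\<bar> \<le> r * (1 / 2) ^ N"
        using errors[of N] u by (simp add: bounded_by_def)
      ultimately show ?thesis by (simp add: algebra_simps abs_le_iff)
    qed
    then show ?thesis using zero_if_abs_le_geometric by fastforce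
  qed
  ultimately show ?thesis by blast
qed

theorem open_mapping:
  "\<exists>C\<ge>0. \<forall>f\<in>Z. \<forall>c\<ge>0. bounded_by U f c \<longrightarrow> (\<exists>g. bounded_by T g (C * c) \<and> (\<forall>u\<in>U. D g u = f u))"
proof -
  obtain m r where m: "0 \<le> m" and r: "0 < r" and ball: "\<forall>f\<in>Z. bounded_by U f r \<longrightarrow> approximable m f"
    using approximable_near_zero by blast
  have "\<exists>g. bounded_by T g (2 * m / r * c) \<and> (\<forall>u\<in>U. D g u = f u)"
    if f: "f \<in> Z" "bounded_by U f c" and c: "0 \<le> c" for f c
  proof (cases "c = 0")
    case True
    then have "bounded_by T (\<lambda>t. 0) (2 * m / r * c) \<and> (\<forall>u\<in>U. D (\<lambda>t. 0) u = f u)"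
      using f(2) by (simp add: bounded_by_def D_zero)
    then show ?thesis by blast
  next
    case False
    with c have c: "0 < c" by simp
    define f' where "f' u = (r / c) * f u" for u
    have "bounded_by U f' (\<bar>r / c\<bar> * c)" unfolding f'_def by (rule bounded_by_scale[OF f(2)])
    moreover have "f' \<in> Z" unfolding f'_def by (rule Z_scale[OF f(1)])
    ultimately obtain g where g: "bounded_by T g (2 * m)" "\<forall>u\<in>U. D g u = f' u"
      using exact_preimage_near_zero[OF ball m r] r c by auto
    have "bounded_by T (\<lambda>t. (c / r) * g t) (\<bar>c / r\<bar> * (2 * m))" by (rule bounded_by_scale[OF g(1)])
    moreover have "\<bar>c / r\<bar> * (2 * m) = 2 * m / r * c" using r c by simp
    moreover have "D (\<lambda>t. (c / r) * g t) u = f u" if "u \<in> U" for u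
    proof -
      have "D (\<lambda>t. (c / r) * g t) u = (c / r) * D g u" by (rule D_scale[OF that])
      also have "\<dots> = f u" using g(2) that r c by (simp add: f'_def)
      finally show ?thesis .
    qed
    ultimately show ?thesis by (metis (no_types, lifting))
  qed
  moreover have "0 \<le> 2 * m / r" using m r by simp
  ultimately show ?thesis by blast
qed

end

section \<open>The uniform boundary condition\<close>

definition uniform_boundary_condition :: "('a, 'b) monoid_scheme \<Rightarrow> nat \<Rightarrow> real \<Rightarrow> bool" where
  "uniform_boundary_condition G k C \<longleftrightarrow>
     (\<forall>f c. 0 \<le> c \<longrightarrow> bounded_by (tuples G k) f c \<longrightarrow> (\<forall>xs\<in>tuples G (k + 1). coboundary G k f xs = 0)
       \<longrightarrow> (\<exists>g. bounded_by (tuples G (k - 1)) g (C * c)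
              \<and> (\<forall>xs\<in>tuples G k. coboundary G (k - 1) g xs = f xs)))"

lemma uniform_boundary_condition_if_vanishes:
  assumes G: "monoid G" and k: "1 \<le> k" and vanishes: "bounded_cohomology_vanishes G k"
  shows "\<exists>C\<ge>0. uniform_boundary_condition G k C"
proof -
  have k_eq: "k - 1 + 1 = k" using k by simp
  define Z where "Z = {f. bcochain G k f \<and> (\<forall>xs\<in>tuples G (k + 1). coboundary G k f xs = 0)}"
  interpret sup_norm_open_mapping "coboundary G (k - 1)" "tuples G (k - 1)" "tuples G k" Z
    "real (k - 1) + 2"
  proof
    show "coboundary G (k - 1) (\<lambda>t. a * g t + b * h t) u
        = a * coboundary G (k - 1) g u + b * coboundary G (k - 1) h u" for g h a b u
      by (rule coboundary_linear)
    show "\<bar>coboundary G (k - 1) g u\<bar> \<le> (real (k - 1) + 2) * c"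
      if "bounded_by (tuples G (k - 1)) g c" "u \<in> tuples G k" for g c u
      using abs_coboundary_le[OF G that(1)] that(2) k_eq by simp
    show "(\<lambda>u. a * f u + b * h u) \<in> Z" if fh: "f \<in> Z" "h \<in> Z" for f h a b
    proof -
      obtain c d where "bounded_by (tuples G k) f c" "bounded_by (tuples G k) h d"
        using fh unfolding Z_def bcochain_iff_bounded_by by blast
      then have "bounded_by (tuples G k) (\<lambda>u. a * f u + b * h u) (\<bar>a\<bar> * c + \<bar>b\<bar> * d)"
        by (intro bounded_by_add bounded_by_scale)
      then show ?thesis using fh by (auto simp: Z_def bcochain_iff_bounded_by coboundary_linear)
    qed
    show "coboundary G (k - 1) g \<in> Z" if "bounded_by (tuples G (k - 1)) g c" for g c
      using abs_coboundary_le[OF G that] coboundary_coboundary[OF G, of _ "k - 1" g] k_eq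
      by (auto simp: Z_def bcochain_def)
    show "f \<in> Z" if fs: "\<And>j. fs j \<in> Z" and lim: "\<And>u. u \<in> tuples G k \<Longrightarrow> (\<lambda>j. fs j u) \<longlonglongrightarrow> f u"
      and f: "bounded_by (tuples G k) f c" for fs f c
      using coboundary_eq_0_if_tendsto[OF G _ lim] fs f by (auto simp: Z_def bcochain_iff_bounded_by)
    show "\<exists>g c'. bounded_by (tuples G (k - 1)) g c' \<and> (\<forall>u\<in>tuples G k. coboundary G (k - 1) g u = f u)"
      if "f \<in> Z" for f
      using vanishes that unfolding bounded_cohomology_vanishes_def Z_def
      by (fastforce simp: bcochain_iff_bounded_by)
  qed
  obtain C where "0 \<le> C" "\<forall>f\<in>Z. \<forall>c\<ge>0. bounded_by (tuples G k) f c \<longrightarrow>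
      (\<exists>g. bounded_by (tuples G (k - 1)) g (C * c) \<and> (\<forall>u\<in>tuples G k. coboundary G (k - 1) g u = f u))"
    using open_mapping by blast
  then show ?thesis
    unfolding uniform_boundary_condition_def Z_def by (fastforce simp: bcochain_iff_bounded_by)
qed

lemma uniform_boundary_condition_iso:
  assumes A: "group A" and iso: "\<phi> \<in> iso A B" and B: "uniform_boundary_condition B k C" and k: "1 \<le> k"
  shows "uniform_boundary_condition A k C"
  unfolding uniform_boundary_condition_def
proof (intro allI impI)
  fix f c assume c: "0 \<le> c" and f_bounded: "bounded_by (tuples A k) f c"
    and f_cocycle: "\<forall>xs\<in>tuples A (k + 1). coboundary A k f xs = 0"
  define \<psi> where "\<psi> = inv_into (carrier A) \<phi>"
  have \<psi>: "\<psi> \<in> hom B A"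
    using group.iso_set_sym[OF A iso] iso_imp_homomorphism unfolding \<psi>_def by blast
  have \<phi>: "\<phi> \<in> hom A B" using iso iso_imp_homomorphism by blast
  have \<psi>_\<phi>: "map \<psi> (map \<phi> xs) = xs" if "xs \<in> tuples A j" for xs j
    using that iso unfolding \<psi>_def tuples_def iso_def bij_betw_def
    by (auto intro!: map_idI inv_into_f_f)
  define f' where "f' ys = f (map \<psi> ys)" for ys
  have "bounded_by (tuples B k) f' c"
    using f_bounded map_in_tuples[OF \<psi>] unfolding bounded_by_def f'_def by blast
  moreover have "\<forall>ys\<in>tuples B (k + 1). coboundary B k f' ys = 0"
    using f_cocycle map_in_tuples[OF \<psi>] coboundary_comp_hom[OF \<psi>] unfolding f'_def by simp
  ultimately obtain g' where g': "bounded_by (tuples B (k - 1)) g' (C * c)"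
    "\<forall>xs\<in>tuples B k. coboundary B (k - 1) g' xs = f' xs"
    using B c unfolding uniform_boundary_condition_def by blast
  define g where "g xs = g' (map \<phi> xs)" for xs
  have "bounded_by (tuples A (k - 1)) g (C * c)"
    using g'(1) map_in_tuples[OF \<phi>] unfolding bounded_by_def g_def by blast
  moreover have "coboundary A (k - 1) g xs = f xs" if xs: "xs \<in> tuples A k" for xs
  proof -
    have "coboundary A (k - 1) g xs = coboundary B (k - 1) g' (map \<phi> xs)"
      unfolding g_def using coboundary_comp_hom[OF \<phi>, of xs "k - 1"] xs k by simp
    also have "\<dots> = f xs" using g'(2) map_in_tuples[OF \<phi> xs] \<psi>_\<phi>[OF xs] by (simp add: f'_def)
    finally show ?thesis .
  qed
  ultimately show "\<exists>g. bounded_by (tuples A (k - 1)) g (C * c)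
      \<and> (\<forall>xs\<in>tuples A k. coboundary A (k - 1) g xs = f xs)" by blast
qed

lemma uniform_boundary_condition_primitive:
  assumes G: "monoid G" and k: "1 \<le> k" and C: "0 \<le> C" and ubc: "uniform_boundary_condition G k C"
    and c: "0 \<le> c" and f_bounded: "bounded_by (tuples G k) f c"
    and f_cocycle: "\<forall>xs\<in>tuples G (k + 1). coboundary G k f xs = 0"
  shows "\<exists>g. (\<forall>t. \<bar>g t\<bar> \<le> C * c) \<and> (\<forall>xs\<in>tuples G k. coboundary G (k - 1) g xs = f xs)"
proof -
  obtain g where g: "bounded_by (tuples G (k - 1)) g (C * c)"
    "\<forall>xs\<in>tuples G k. coboundary G (k - 1) g xs = f xs"
    using ubc c f_bounded f_cocycle unfolding uniform_boundary_condition_def by blast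
  define g0 where "g0 t = (if t \<in> tuples G (k - 1) then g t else 0)" for t
  have "\<forall>t. \<bar>g0 t\<bar> \<le> C * c" using g(1) C c by (simp add: g0_def bounded_by_def)
  moreover have "coboundary G (k - 1) g0 xs = f xs" if "xs \<in> tuples G k" for xs
    using coboundary_cong[OF G, of "k - 1" g0 g xs] g(2) that k by (simp add: g0_def)
  ultimately show ?thesis by blast
qed

section \<open>Directed unions\<close>

lemma bounded_functions_cluster_point:
  fixes F :: "('x \<Rightarrow> real) filter"
  assumes "F \<noteq> bot" "eventually (\<lambda>h. \<forall>t. \<bar>h t\<bar> \<le> M) F"
  shows "\<exists>g. (\<forall>t. \<bar>g t\<bar> \<le> M) \<and> inf (nhds g) F \<noteq> bot"
proof -
  define K :: "('x \<Rightarrow> real) set" where "K = PiE UNIV (\<lambda>_. {-M..M})"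
  have "compactin (product_topology (\<lambda>_. euclidean) UNIV) K"
    unfolding K_def by (simp add: compactin_PiE)
  then have "compact K" by (metis compactin_euclidean_iff euclidean_product_topology)
  moreover have "eventually (\<lambda>h. h \<in> K) F"
    using assms(2) by (rule eventually_mono) (simp add: K_def PiE_iff abs_le_iff minus_le_iff)
  ultimately obtain g where "g \<in> K" "inf (nhds g) F \<noteq> bot"
    using assms(1) unfolding compact_filter by blast
  moreover from \<open>g \<in> K\<close> have "\<forall>t. \<bar>g t\<bar> \<le> M"
    by (simp add: K_def PiE_iff abs_le_iff minus_le_iff)
  ultimately show ?thesis by blast
qed

lemma cluster_point_eventually_const:
  fixes \<Phi> :: "'a::topological_space \<Rightarrow> 'b::t2_space"
  assumes "inf (nhds x) F \<noteq> bot" "continuous_on UNIV \<Phi>" "eventually (\<lambda>y. \<Phi> y = c) F"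
  shows "\<Phi> x = c"
proof (rule tendsto_unique[OF assms(1)])
  have "(\<Phi> \<longlongrightarrow> \<Phi> x) (nhds x)"
    using assms(2) by (simp add: continuous_on_def tendsto_at_iff_tendsto_nhds[symmetric])
  then show "(\<Phi> \<longlongrightarrow> \<Phi> x) (inf (nhds x) F)" by (rule tendsto_mono[OF inf_le1])
  show "(\<Phi> \<longlongrightarrow> c) (inf (nhds x) F)"
    using assms(3) by (intro tendsto_eventually) (rule filter_leD[OF inf_le2])
qed

definition tails :: "'i set \<Rightarrow> ('i \<Rightarrow> 'a set) \<Rightarrow> 'i filter" where
  "tails I H = (INF i\<in>I. principal {j\<in>I. H i \<subseteq> H j})"

lemma eventually_tails: "i \<in> I \<Longrightarrow> eventually (\<lambda>j. j \<in> I \<and> H i \<subseteq> H j) (tails I H)"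
  unfolding tails_def by (auto intro: filter_leD[OF INF_lower] simp: eventually_principal)

lemma tails_ne_bot:
  assumes "I \<noteq> {}" and dir: "\<And>i j. i \<in> I \<Longrightarrow> j \<in> I \<Longrightarrow> \<exists>l\<in>I. H i \<subseteq> H l \<and> H j \<subseteq> H l"
  shows "tails I H \<noteq> bot"
proof -
  have "tails I H = bot \<longleftrightarrow> (\<exists>i\<in>I. principal {j\<in>I. H i \<subseteq> H j} = bot)"
    unfolding tails_def
  proof (rule INF_filter_bot_base)
    fix i j assume "i \<in> I" "j \<in> I"
    with dir obtain l where "l \<in> I" "H i \<subseteq> H l" "H j \<subseteq> H l" by blast
    then show "\<exists>l\<in>I. principal {m\<in>I. H l \<subseteq> H m}
        \<le> inf (principal {m\<in>I. H i \<subseteq> H m}) (principal {m\<in>I. H j \<subseteq> H m})"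
      by (intro bexI[of _ l]) auto
  qed
  then show ?thesis using assms(1) by (auto simp: principal_eq_bot_iff)
qed

lemma list_in_directed_union:
  assumes "I \<noteq> {}" and dir: "\<And>i j. i \<in> I \<Longrightarrow> j \<in> I \<Longrightarrow> \<exists>l\<in>I. H i \<subseteq> H l \<and> H j \<subseteq> H l"
    and "set xs \<subseteq> (\<Union>i\<in>I. H i)"
  shows "\<exists>i\<in>I. set xs \<subseteq> H i"
  using assms(3)
proof (induction xs)
  case Nil
  then show ?case using assms(1) by auto
next
  case (Cons x xs)
  then obtain a b where "a \<in> I" "x \<in> H a" "b \<in> I" "set xs \<subseteq> H b" by auto
  then show ?case using dir[of a b] by auto
qed

lemma primitive_from_directed_primitives:
  assumes I: "I \<noteq> {}" and dir: "\<And>i j. i \<in> I \<Longrightarrow> j \<in> I \<Longrightarrow> \<exists>l\<in>I. H i \<subseteq> H l \<and> H j \<subseteq> H l"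
    and union: "(\<Union>i\<in>I. H i) = carrier \<Gamma>"
    and g_bounded: "\<And>i t. i \<in> I \<Longrightarrow> \<bar>g i t\<bar> \<le> M"
    and g_primitive: "\<And>i xs. i \<in> I \<Longrightarrow> xs \<in> tuples \<Gamma> k \<Longrightarrow> set xs \<subseteq> H i
      \<Longrightarrow> coboundary \<Gamma> (k - 1) (g i) xs = f xs"
  shows "\<exists>h. (\<forall>t. \<bar>h t\<bar> \<le> M) \<and> (\<forall>xs\<in>tuples \<Gamma> k. coboundary \<Gamma> (k - 1) h xs = f xs)"
proof -
  define F where "F = filtermap g (tails I H)"
  obtain i0 where "i0 \<in> I" using I by blast
  have "eventually (\<lambda>h. \<forall>t. \<bar>h t\<bar> \<le> M) F"
    unfolding F_def eventually_filtermap
    using eventually_tails[OF \<open>i0 \<in> I\<close>] by (rule eventually_mono) (simp add: g_bounded)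
  moreover have "F \<noteq> bot"
    unfolding F_def using tails_ne_bot[OF I dir] by (simp add: filtermap_bot_iff)
  ultimately obtain h where h_bounded: "\<forall>t. \<bar>h t\<bar> \<le> M" and h: "inf (nhds h) F \<noteq> bot"
    using bounded_functions_cluster_point by blast
  have "coboundary \<Gamma> (k - 1) h xs = f xs" if xs: "xs \<in> tuples \<Gamma> k" for xs
  proof (rule cluster_point_eventually_const[OF h continuous_on_coboundary])
    have "set xs \<subseteq> (\<Union>i\<in>I. H i)" using xs union by (simp add: tuples_def)
    then obtain i where "i \<in> I" "set xs \<subseteq> H i" using list_in_directed_union[OF I dir] by blast
    then have "eventually (\<lambda>j. j \<in> I \<and> set xs \<subseteq> H j) (tails I H)"
      using eventually_tails by (force elim: eventually_mono)
    then show "eventually (\<lambda>h. coboundary \<Gamma> (k - 1) h xs = f xs) F"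
      unfolding F_def eventually_filtermap by (rule eventually_mono) (blast intro: g_primitive xs)
  qed
  with h_bounded show ?thesis by blast
qed

lemma bounded_cohomology_vanishes_directed_union:
  assumes \<Gamma>: "monoid \<Gamma>" and k: "1 \<le> k" and C: "0 \<le> C"
    and sub: "\<And>i. i \<in> I \<Longrightarrow> submonoid (H i) \<Gamma>"
    and dir: "\<And>i j. i \<in> I \<Longrightarrow> j \<in> I \<Longrightarrow> \<exists>l\<in>I. H i \<subseteq> H l \<and> H j \<subseteq> H l"
    and union: "(\<Union>i\<in>I. H i) = carrier \<Gamma>"
    and ubc: "\<And>i. i \<in> I \<Longrightarrow> uniform_boundary_condition (\<Gamma>\<lparr>carrier := H i\<rparr>) k C"
  shows "bounded_cohomology_vanishes \<Gamma> k"
  unfolding bounded_cohomology_vanishes_def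
proof (intro allI impI)
  fix f assume "bcochain \<Gamma> k f \<and> (\<forall>xs\<in>tuples \<Gamma> (k + 1). coboundary \<Gamma> k f xs = 0)"
  then obtain c where c: "0 \<le> c" and f_bounded: "bounded_by (tuples \<Gamma> k) f c"
    and f_cocycle: "\<forall>xs\<in>tuples \<Gamma> (k + 1). coboundary \<Gamma> k f xs = 0"
    unfolding bcochain_iff_bounded_by by (meson bounded_by_mono max.cobounded1 max.cobounded2)
  have "\<exists>g. (\<forall>t. \<bar>g t\<bar> \<le> C * c)
      \<and> (\<forall>xs\<in>tuples (\<Gamma>\<lparr>carrier := H i\<rparr>) k. coboundary \<Gamma> (k - 1) g xs = f xs)" if i: "i \<in> I" for i
  proof -
    have tuples_sub: "tuples (\<Gamma>\<lparr>carrier := H i\<rparr>) j \<subseteq> tuples \<Gamma> j" for j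
      using submonoid.subset[OF sub[OF i]] by (auto simp: tuples_def)
    then have "bounded_by (tuples (\<Gamma>\<lparr>carrier := H i\<rparr>) k) f c"
      using f_bounded by (auto simp: bounded_by_def)
    moreover have "\<forall>xs\<in>tuples (\<Gamma>\<lparr>carrier := H i\<rparr>) (k + 1). coboundary (\<Gamma>\<lparr>carrier := H i\<rparr>) k f xs = 0"
      using f_cocycle tuples_sub by auto
    ultimately show ?thesis
      using uniform_boundary_condition_primitive[OF submonoid.submonoid_is_monoid[OF sub[OF i] \<Gamma>]
          k C ubc[OF i] c] by simp
  qed
  then obtain g where g_bounded: "\<And>i t. i \<in> I \<Longrightarrow> \<bar>g i t\<bar> \<le> C * c"
    and g_primitive: "\<And>i xs. i \<in> I \<Longrightarrow> xs \<in> tuples (\<Gamma>\<lparr>carrier := H i\<rparr>) k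
      \<Longrightarrow> coboundary \<Gamma> (k - 1) (g i) xs = f xs"
    by metis
  have "coboundary \<Gamma> (k - 1) (g i) xs = f xs"
    if "i \<in> I" "xs \<in> tuples \<Gamma> k" "set xs \<subseteq> H i" for i xs
    using g_primitive[OF that(1)] that(2,3) by (simp add: tuples_def)
  moreover have "I \<noteq> {}" using union monoid.one_closed[OF \<Gamma>] by auto
  ultimately obtain h where "\<forall>t. \<bar>h t\<bar> \<le> C * c" "\<forall>xs\<in>tuples \<Gamma> k. coboundary \<Gamma> (k - 1) h xs = f xs"
    using primitive_from_directed_primitives[of I H \<Gamma> g "C * c" k f] dir union g_bounded by blast
  then show "\<exists>g. bcochain \<Gamma> (k - 1) g \<and> (\<forall>xs\<in>tuples \<Gamma> k. f xs = coboundary \<Gamma> (k - 1) g xs)"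
    unfolding bcochain_def by (intro exI[of _ h]) auto
qed

theorem corollary4p14:
  fixes \<Gamma> :: "('a, 'b) monoid_scheme" and I :: "'i set" and H :: "'i \<Rightarrow> 'a set" and n :: nat
  assumes "n \<ge> 1"
    and "group \<Gamma>"
    and "\<And>i. i \<in> I \<Longrightarrow> subgroup (H i) \<Gamma>"
    and "\<And>i j. i \<in> I \<Longrightarrow> j \<in> I \<Longrightarrow> \<exists>k \<in> I. H i \<subseteq> H k \<and> H j \<subseteq> H k"
    and "(\<Union>i \<in> I. H i) = carrier \<Gamma>"
    and "\<And>i j. i \<in> I \<Longrightarrow> j \<in> I \<Longrightarrow> \<Gamma>\<lparr>carrier := H i\<rparr> \<cong> \<Gamma>\<lparr>carrier := H j\<rparr>"
    and "\<And>i. i \<in> I \<Longrightarrow> boundedly_acyclic (\<Gamma>\<lparr>carrier := H i\<rparr>) n"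
  shows "boundedly_acyclic \<Gamma> n"
  unfolding boundedly_acyclic_def
proof
  fix k assume "k \<in> {1..n}"
  then have k: "1 \<le> k" and vanishes: "\<And>i. i \<in> I \<Longrightarrow> bounded_cohomology_vanishes (\<Gamma>\<lparr>carrier := H i\<rparr>) k"
    using assms(7) by (auto simp: boundedly_acyclic_def)
  have sub_group: "group (\<Gamma>\<lparr>carrier := H i\<rparr>)" if "i \<in> I" for i
    using subgroup.subgroup_is_group[OF assms(3)[OF that] assms(2)] .
  obtain i0 where i0: "i0 \<in> I"
    using assms(5) monoid.one_closed[OF group.is_monoid[OF assms(2)]] by auto
  obtain C where C: "0 \<le> C" "uniform_boundary_condition (\<Gamma>\<lparr>carrier := H i0\<rparr>) k C"
    using uniform_boundary_condition_if_vanishes[OF group.is_monoid[OF sub_group[OF i0]] k vanishes[OF i0]]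
    by blast
  have "uniform_boundary_condition (\<Gamma>\<lparr>carrier := H i\<rparr>) k C" if i: "i \<in> I" for i
  proof -
    obtain \<phi> where "\<phi> \<in> iso (\<Gamma>\<lparr>carrier := H i\<rparr>) (\<Gamma>\<lparr>carrier := H i0\<rparr>)"
      using assms(6)[OF i i0] unfolding is_iso_def by blast
    from uniform_boundary_condition_iso[OF sub_group[OF i] this C(2) k] show ?thesis .
  qed
  then show "bounded_cohomology_vanishes \<Gamma> k"
    using bounded_cohomology_vanishes_directed_union[OF group.is_monoid[OF assms(2)] k C(1)
        subgroup_is_submonoid[OF assms(3)] assms(4,5)] by blast
qed

end
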